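(* Let $g\ge1$, $n\ge3$ and $x\in A_g^n$. Then: \begin{enumerate} \item $1/g>x_1\ge x_n>0$; \item for no $k\in\{1,\dots,n-1\}$ do $x_k=x_{k+1}$ and $x_1\cdots x_k=g(x_{k+1}+\dots+x_n)$ hold simultaneously; \item if for some $1\le k\le n-1$ the equality $x_1\cdots x_i=g(x_{i+1}+\dots+x_n)$ holds for all $i\le k$, then $x_i=1/s_{g,i}$ for all $i=1,\dots,k$. \end{enumerate}
   Context: For $g,n\ge1$, $A_g^n\subseteq\mathbb{R}^n$ is the set of $(x_1,\dots,x_n)$ with (A1) $x_1\ge\dots\ge x_n\ge0$; (A2) $x_1+\dots+x_n=1/g$; (A3) $x_1\cdots x_k\le g(x_{k+1}+\dots+x_n)$ for all $k=1,\dots,n-1$. Sylvester sequence: $s_{g,1}=g+1$, $s_{g,k+1}=s_{g,k}(s_{g,k}-1)+1$. *)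

theory Defs
  imports Main "HOL.Real"
begin

text \<open>Points of R^n are represented as functions nat => real; only the
  coordinates x 1, ..., x n are meaningful.\<close>

definition A_set :: "nat \<Rightarrow> nat \<Rightarrow> (nat \<Rightarrow> real) set" where
  "A_set g n = {x.
     (\<forall>i\<in>{1..<n}. x i \<ge> x (Suc i)) \<and> x n \<ge> 0 \<and>
     (\<Sum>i=1..n. x i) = 1 / real g \<and>
     (\<forall>k\<in>{1..<n}. (\<Prod>i=1..k. x i) \<le> real g * (\<Sum>i=Suc k..n. x i))}"

primrec sylv_aux :: "nat \<Rightarrow> nat \<Rightarrow> nat" where
  "sylv_aux g 0 = g + 1"
| "sylv_aux g (Suc k) = sylv_aux g k * (sylv_aux g k - 1) + 1"

text \<open>s g k = s_{g,k} for k >= 1.\<close>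
definition sylv :: "nat \<Rightarrow> nat \<Rightarrow> nat" where
  "sylv g k = sylv_aux g (k - 1)"

end

theory Submission
  imports Defs
begin

text \<open>Call \<open>k\<close> tight if (A3) holds with equality at \<open>k\<close>. All coordinates are positive:
  (A3) at \<open>k\<close> makes the tail after \<open>k\<close> positive once \<open>x\<^sub>1, \<dots>, x\<^sub>k\<close> are, and \<open>x\<^sub>k\<^sub>+\<^sub>1\<close>
  is the largest entry of that tail. A plateau \<open>x\<^sub>k = x\<^sub>k\<^sub>+\<^sub>1\<close> at a tight \<open>k\<close> contradicts
  (A3) at \<open>k + 1\<close>, since \<open>x\<^sub>1 \<cdots> x\<^sub>k\<^sub>-\<^sub>1 \<le> 1 \<le> g\<close>. Two consecutive tight indices
  \<open>i, i + 1\<close> force \<open>x\<^sub>i\<^sub>+\<^sub>1 = P\<^sub>i / (g + P\<^sub>i)\<close> with \<open>P\<^sub>i = x\<^sub>1 \<cdots> x\<^sub>i\<close>; as index \<open>0\<close> is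
  always tight, induction gives \<open>P\<^sub>i = g / (s\<^sub>g\<^sub>,\<^sub>i\<^sub>+\<^sub>1 - 1)\<close>, which is exactly the
  Sylvester recursion.\<close>

definition tight_at :: "nat \<Rightarrow> nat \<Rightarrow> (nat \<Rightarrow> real) \<Rightarrow> nat \<Rightarrow> bool" where
  "tight_at g n x k \<longleftrightarrow> (\<Prod>i=1..k. x i) = real g * (\<Sum>j=Suc k..n. x j)"

lemma prod_Suc_eq: "(\<Prod>i=1..Suc k. x i) = (\<Prod>i=1..k. x i) * x (Suc k)"
  by (simp add: prod.cl_ivl_Suc)

lemma sum_Suc_eq: "k < n \<Longrightarrow> (\<Sum>j=Suc k..n. x j) = x (Suc k) + (\<Sum>j=Suc (Suc k)..n. x j)"
  by (simp add: sum.atLeast_Suc_atMost)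

lemma sylv_aux_ge_2: "g \<ge> 1 \<Longrightarrow> sylv_aux g j \<ge> 2"
proof (induction j)
  case (Suc j)
  then have "2 * 1 \<le> sylv_aux g j * (sylv_aux g j - 1)"
    by (intro mult_le_mono) auto
  then show ?case by (simp only: sylv_aux.simps)
qed simp

lemma real_sylv_aux_Suc:
  "g \<ge> 1 \<Longrightarrow> real (sylv_aux g (Suc j)) - 1 = real (sylv_aux g j) * (real (sylv_aux g j) - 1)"
  using sylv_aux_ge_2[of g j] by (simp add: of_nat_diff)

text \<open>Subtracting the two equalities gives \<open>P\<^sub>k = (g + P\<^sub>k) x\<^sub>k\<^sub>+\<^sub>1\<close>.\<close>
lemma next_coordinate_if_tight:
  fixes x :: "nat \<Rightarrow> real"
  assumes "tight_at g n x k" "tight_at g n x (Suc k)" "k < n"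
    and "real g + (\<Prod>i=1..k. x i) \<noteq> 0"
  shows "x (Suc k) = (\<Prod>i=1..k. x i) / (real g + (\<Prod>i=1..k. x i))"
  using assms unfolding tight_at_def
  by (simp add: prod_Suc_eq sum_Suc_eq field_simps)

text \<open>Index \<open>0\<close> is included: \<open>P\<^sub>0 = 1 = g \<cdot> (1/g)\<close>.\<close>
lemma tight_at_upto:
  assumes "g \<ge> 1" "(\<Sum>i=1..n. x i) = 1 / real g" "\<forall>i\<in>{1..k}. tight_at g n x i" "j \<le> k"
  shows "tight_at g n x j"
  using assms by (cases "j = 0") (auto simp: tight_at_def)

lemma coordinate_eq_sylvester_step:
  fixes x :: "nat \<Rightarrow> real"
  assumes g: "g \<ge> 1" and "tight_at g n x j" "tight_at g n x (Suc j)" "j < n"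
    and P: "(\<Prod>i=1..j. x i) = real g / (real (sylv_aux g j) - 1)"
  shows "x (Suc j) = 1 / real (sylv_aux g j)"
proof -
  define a where "a = real (sylv_aux g j)"
  have a: "a \<ge> 2" using sylv_aux_ge_2[OF g] by (simp add: a_def)
  have "real g / (a - 1) > 0" using g a by simp
  then have "x (Suc j) = (real g / (a - 1)) / (real g + real g / (a - 1))"
    using next_coordinate_if_tight[of g n x j] assms P by (simp add: a_def)
  also have "\<dots> = 1 / a" using g a by (simp add: field_simps)
  finally show ?thesis by (simp add: a_def)
qed

lemma prod_eq_sylvester_if_tight:
  fixes x :: "nat \<Rightarrow> real"
  assumes g: "g \<ge> 1" and sum: "(\<Sum>i=1..n. x i) = 1 / real g" and "k < n"
    and tight: "\<forall>i\<in>{1..k}. tight_at g n x i" and "j \<le> k"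
  shows "(\<Prod>i=1..j. x i) = real g / (real (sylv_aux g j) - 1)"
  using \<open>j \<le> k\<close>
proof (induction j)
  case (Suc j)
  have "tight_at g n x j" "tight_at g n x (Suc j)"
    using Suc.prems by (auto intro: tight_at_upto[OF g sum tight])
  then have "x (Suc j) = 1 / real (sylv_aux g j)"
    using Suc \<open>k < n\<close> by (intro coordinate_eq_sylvester_step[OF g]) auto
  moreover have "real (sylv_aux g j) \<noteq> 0" using sylv_aux_ge_2[OF g, of j] by simp
  ultimately show ?case
    using Suc real_sylv_aux_Suc[OF g, of j] by (simp add: prod_Suc_eq)
qed (use g in simp)

lemma coordinate_eq_sylvester_if_tight:
  fixes x :: "nat \<Rightarrow> real"
  assumes g: "g \<ge> 1" and sum: "(\<Sum>i=1..n. x i) = 1 / real g" and "k < n"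
    and tight: "\<forall>i\<in>{1..k}. tight_at g n x i" and i: "i \<in> {1..k}"
  shows "x i = 1 / real (sylv g i)"
proof -
  obtain j where j: "i = Suc j" using i by (cases i) auto
  then have "x i = 1 / real (sylv_aux g j)"
    using i \<open>k < n\<close>
    by (auto intro!: coordinate_eq_sylvester_step[OF g] tight_at_upto[OF g sum tight]
        prod_eq_sylvester_if_tight[OF assms(1-4)])
  then show ?thesis by (simp add: j sylv_def)
qed

lemma A_set_antimono:
  assumes "x \<in> A_set g n" "1 \<le> i" "i \<le> j" "j \<le> n"
  shows "x j \<le> x i"
  using assms(3,4)
proof (induction j rule: dec_induct)
  case (step m)
  have "x (Suc m) \<le> x m" using assms(1,2) step.hyps step.prems by (simp add: A_set_def)
  then show ?case using step by simp
qed simp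

lemma A_set_prod_le_tail:
  assumes "x \<in> A_set g n" "1 \<le> k" "k < n"
  shows "(\<Prod>i=1..k. x i) \<le> real g * (\<Sum>j=Suc k..n. x j)"
  using assms unfolding A_set_def by auto

lemma A_set_pos_if_tail_pos:
  assumes "x \<in> A_set g n" "1 \<le> m" "0 < (\<Sum>i=m..n. x i)"
  shows "0 < x m"
proof -
  have "(\<Sum>i=m..n. x i) \<le> real (card {m..n}) * x m"
    using A_set_antimono[OF assms(1,2)] by (intro sum_bounded_above) auto
  then show ?thesis
    using assms(3) mult_nonneg_nonpos[of "real (card {m..n})" "x m"] by linarith
qed

lemma A_set_pos:
  assumes g: "g \<ge> 1" and x: "x \<in> A_set g n" and "1 \<le> i" "i \<le> n"
  shows "0 < x i"
  using assms(3,4)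
proof (induction i rule: less_induct)
  case (less i)
  show ?case
  proof (cases "i = 1")
    case True
    then show ?thesis using A_set_pos_if_tail_pos[OF x] x g by (simp add: A_set_def)
  next
    case False
    then obtain k where k: "i = Suc k" "1 \<le> k" using less.prems by (cases i) auto
    have "0 < (\<Prod>i=1..k. x i)" using less k by (intro prod_pos) auto
    also have "\<dots> \<le> real g * (\<Sum>j=i..n. x j)"
      using A_set_prod_le_tail[OF x, of k] k less.prems by simp
    finally have "0 < (\<Sum>j=i..n. x j)" using g by (simp add: zero_less_mult_iff)
    then show ?thesis using A_set_pos_if_tail_pos[OF x] less.prems by simp
  qed
qed

lemma A_set_first_lt:
  assumes g: "g \<ge> 1" and x: "x \<in> A_set g n" and "n \<ge> 2"
  shows "x 1 < 1 / real g"
proof -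
  have "0 < (\<Sum>i=2..n. x i)" using A_set_pos[OF g x] \<open>n \<ge> 2\<close> by (intro sum_pos) auto
  moreover have "(\<Sum>i=1..n. x i) = x 1 + (\<Sum>i=2..n. x i)"
    using \<open>n \<ge> 2\<close> by (simp add: sum.atLeast_Suc_atMost numeral_2_eq_2)
  ultimately show ?thesis using x by (simp add: A_set_def)
qed

lemma A_set_lt_1:
  assumes g: "g \<ge> 1" and x: "x \<in> A_set g n" and "n \<ge> 2" "1 \<le> i" "i \<le> n"
  shows "x i < 1"
proof -
  have "1 / real g \<le> 1" using g by simp
  then show ?thesis
    using A_set_first_lt[OF g x] A_set_antimono[OF x, of 1 i] assms(3-) by simp
qed

lemma A_set_prod_le_1:
  assumes g: "g \<ge> 1" and x: "x \<in> A_set g n" and "n \<ge> 2" "k \<le> n"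
  shows "(\<Prod>i=1..k. x i) \<le> 1"
  using A_set_pos[OF g x] A_set_lt_1[OF g x] assms(3,4) by (intro prod_le_1) (auto intro: less_imp_le)

lemma A_set_prod_lt_1:
  assumes g: "g \<ge> 1" and x: "x \<in> A_set g n" and "n \<ge> 2" "1 \<le> k" "k \<le> n"
  shows "(\<Prod>i=1..k. x i) < 1"
proof -
  obtain m where m: "k = Suc m" using \<open>1 \<le> k\<close> by (cases k) auto
  have "(\<Prod>i=1..m. x i) * x k \<le> x k"
    using A_set_prod_le_1[OF g x] A_set_pos[OF g x] assms(3-) m
    by (intro mult_left_le_one_le prod_nonneg) (auto intro: less_imp_le)
  moreover have "x k < 1" using A_set_lt_1[OF g x] assms(3-) by simp
  ultimately show ?thesis using m by (simp add: prod_Suc_eq)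
qed

lemma A_set_no_tight_plateau:
  assumes g: "g \<ge> 1" and x: "x \<in> A_set g n" and "n \<ge> 3" "1 \<le> k" "k < n"
    and plateau: "x k = x (Suc k)"
  shows "\<not> tight_at g n x k"
proof
  assume tight: "tight_at g n x k"
  obtain m where m: "k = Suc m" using \<open>1 \<le> k\<close> by (cases k) auto
  define q where "q = (\<Prod>i=1..m. x i)"
  define t where "t = x k"
  have t: "t > 0" using A_set_pos[OF g x] assms(4,5) by (simp add: t_def)
  have q: "0 < q" "q \<le> 1"
    using A_set_pos[OF g x] A_set_prod_le_1[OF g x] assms(3,5) m
    by (auto simp: q_def intro: prod_pos)
  have Pk: "(\<Prod>i=1..k. x i) = q * t" by (simp add: m prod_Suc_eq q_def t_def)
  show False
  proof (cases "Suc k < n")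
    case True
    let ?T = "\<Sum>j=Suc (Suc k)..n. x j"
    have "q * t = real g * (t + ?T)"
      using tight Pk sum_Suc_eq[OF \<open>k < n\<close>, of x] plateau by (simp add: tight_at_def t_def)
    moreover have "(\<Prod>i=1..Suc k. x i) \<le> real g * ?T"
      using A_set_prod_le_tail[OF x, of "Suc k"] True by simp
    then have "q * t * t \<le> real g * ?T" using Pk plateau by (simp add: prod_Suc_eq t_def)
    ultimately have "(q * t) * t \<le> (q - real g) * t" by (simp add: algebra_simps)
    then have "q * t \<le> q - real g" using t by simp
    moreover have "0 < q * t" using q t by simp
    ultimately show False using q g by simp
  next
    case False
    then have n: "n = Suc k" using \<open>k < n\<close> by simp
    have "(\<Prod>i=1..k. x i) = real g * x n" using tight by (simp add: tight_at_def n)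
    then have "q * t = real g * t" using Pk plateau by (auto simp: n t_def)
    then have "q = real g" using t by simp
    moreover have "q < 1" using A_set_prod_lt_1[OF g x] assms(3) m n by (simp add: q_def)
    ultimately show False using g by simp
  qed
qed

theorem proposition3p6:
  fixes g n :: nat and x :: "nat \<Rightarrow> real"
  assumes "g \<ge> 1" and "n \<ge> 3" and "x \<in> A_set g n"
  shows "(1 / real g > x 1 \<and> x 1 \<ge> x n \<and> x n > 0) \<and>
    (\<not> (\<exists>k\<in>{1..<n}. x k = x (Suc k) \<and>
              (\<Prod>i=1..k. x i) = real g * (\<Sum>j=Suc k..n. x j))) \<and>
    (\<forall>k\<in>{1..<n}. (\<forall>i\<in>{1..k}. (\<Prod>j=1..i. x j) = real g * (\<Sum>j=Suc i..n. x j))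
            \<longrightarrow> (\<forall>i\<in>{1..k}. x i = 1 / real (sylv g i)))"
proof (intro conjI)
  show "1 / real g > x 1" using A_set_first_lt assms by simp
  show "x 1 \<ge> x n" using A_set_antimono[OF assms(3)] assms(2) by simp
  show "x n > 0" using A_set_pos[OF assms(1,3)] assms(2) by simp
  show "\<not> (\<exists>k\<in>{1..<n}. x k = x (Suc k) \<and> (\<Prod>i=1..k. x i) = real g * (\<Sum>j=Suc k..n. x j))"
    using A_set_no_tight_plateau[OF assms(1,3,2)] by (auto simp: tight_at_def)
  have "(\<Sum>i=1..n. x i) = 1 / real g" using assms(3) by (simp add: A_set_def)
  then show "\<forall>k\<in>{1..<n}. (\<forall>i\<in>{1..k}. (\<Prod>j=1..i. x j) = real g * (\<Sum>j=Suc i..n. x j))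
            \<longrightarrow> (\<forall>i\<in>{1..k}. x i = 1 / real (sylv g i))"
    using coordinate_eq_sylvester_if_tight[OF assms(1)] by (auto simp: tight_at_def)
qed

end
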